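(* If $(\gamma_0,\ldots,\gamma_{\lfloor d/2\rfloor})$ is an $f$-vector (i.e., the $f$-vector of some simplicial complex), then the $g$-vector $(g_0,\ldots,g_{\lfloor d/2\rfloor})$ is a pure $f$-vector (and hence a pure $M$-vector as well). In particular, $(h_0,\ldots,h_d)$ is an SI-sequence.
   Context: Let $(h_0,\ldots,h_d)\in\mathbb{Z}^{d+1}$ be a sequence of integers with $h_0 = 1$ and $h_i = h_{d-i}$ for each $0\leqslant i\leqslant d$. Consider the palindromic polynomial $h(x) = \sum_{i=0}^d h_i x^i$ and its $\gamma$-expansion $h(x) = \sum_{i=0}^{\lfloor d/2\rfloor} \gamma_i\, x^i(1+x)^{d-2i}$. The $g$-vector is $(g_0,\ldots,g_{\lfloor d/2\rfloor})$ with $g_0 = h_0 = 1$ and $g_i = h_i - h_{i-1}$ for $1\leqslant i\leqslant \lfloor d/2\rfloor$. A sequence is an $f$-vector if it is the $f$-vector $(f_0,f_1,\ldots)$ of a simplicial complex ($f_i$ = number of faces of cardinality $i$), and a pure $f$-vector if the complex can be taken pure; it is an $M$-vector if there is a multicomplex whose degree-$i$ monomials are counted by its $i$-th entry (pure $M$-vector if the multicomplex is pure). An SI-sequence is a sequence $(h_0,\ldots,h_d)$ with $h_0=1$, $h_i=h_{d-i}$, and whose $g$-vector is an $M$-vector. *)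

theory Defs
  imports "HOL-Computational_Algebra.Polynomial" "HOL-Library.Multiset"
begin

text \<open>Finite sequences (a_0,...,a_k) are represented as functions nat => int
  together with the last index k.\<close>

definition simplicial_complex :: "nat set set \<Rightarrow> bool" where
  "simplicial_complex D \<longleftrightarrow> finite D \<and> D \<noteq> {} \<and> (\<forall>F\<in>D. finite F)
     \<and> (\<forall>F\<in>D. \<forall>G. G \<subseteq> F \<longrightarrow> G \<in> D)"

definition pure_complex :: "nat set set \<Rightarrow> bool" where
  "pure_complex D \<longleftrightarrow> (\<forall>F\<in>D. \<forall>G\<in>D.
      (\<not> (\<exists>H\<in>D. F \<subset> H)) \<and> (\<not> (\<exists>H\<in>D. G \<subset> H)) \<longrightarrow> card F = card G)"

definition has_f_vector :: "nat set set \<Rightarrow> (nat \<Rightarrow> int) \<Rightarrow> nat \<Rightarrow> bool" where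
  "has_f_vector D f k \<longleftrightarrow> (\<forall>F\<in>D. card F \<le> k)
     \<and> (\<forall>i\<le>k. f i = int (card {F\<in>D. card F = i}))"

definition is_f_vector :: "(nat \<Rightarrow> int) \<Rightarrow> nat \<Rightarrow> bool" where
  "is_f_vector f k \<longleftrightarrow> (\<exists>D. simplicial_complex D \<and> has_f_vector D f k)"

definition is_pure_f_vector :: "(nat \<Rightarrow> int) \<Rightarrow> nat \<Rightarrow> bool" where
  "is_pure_f_vector f k \<longleftrightarrow> (\<exists>D. simplicial_complex D \<and> pure_complex D \<and> has_f_vector D f k)"

text \<open>Monomials in variables indexed by nat are multisets of variables; divisibility
  is multiset inclusion, degree is size.\<close>

definition multicomplex :: "nat multiset set \<Rightarrow> bool" where
  "multicomplex M \<longleftrightarrow> finite M \<and> M \<noteq> {} \<and> (\<forall>m\<in>M. \<forall>n. n \<subseteq># m \<longrightarrow> n \<in> M)"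

definition pure_multicomplex :: "nat multiset set \<Rightarrow> bool" where
  "pure_multicomplex M \<longleftrightarrow> (\<forall>m\<in>M. \<forall>n\<in>M.
      (\<not> (\<exists>p\<in>M. m \<subset># p)) \<and> (\<not> (\<exists>p\<in>M. n \<subset># p)) \<longrightarrow> size m = size n)"

definition has_M_vector :: "nat multiset set \<Rightarrow> (nat \<Rightarrow> int) \<Rightarrow> nat \<Rightarrow> bool" where
  "has_M_vector M f k \<longleftrightarrow> (\<forall>m\<in>M. size m \<le> k)
     \<and> (\<forall>i\<le>k. f i = int (card {m\<in>M. size m = i}))"

definition is_M_vector :: "(nat \<Rightarrow> int) \<Rightarrow> nat \<Rightarrow> bool" where
  "is_M_vector f k \<longleftrightarrow> (\<exists>M. multicomplex M \<and> has_M_vector M f k)"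

definition is_pure_M_vector :: "(nat \<Rightarrow> int) \<Rightarrow> nat \<Rightarrow> bool" where
  "is_pure_M_vector f k \<longleftrightarrow> (\<exists>M. multicomplex M \<and> pure_multicomplex M \<and> has_M_vector M f k)"

definition g_vector :: "(nat \<Rightarrow> int) \<Rightarrow> nat \<Rightarrow> int" where
  "g_vector h i = (if i = 0 then h 0 else h i - h (i - 1))"

definition h_poly :: "(nat \<Rightarrow> int) \<Rightarrow> nat \<Rightarrow> int poly" where
  "h_poly h d = (\<Sum>i\<le>d. monom (h i) i)"

definition gamma_expansion :: "(nat \<Rightarrow> int) \<Rightarrow> nat \<Rightarrow> int poly" where
  "gamma_expansion \<gamma> d = (\<Sum>i\<le>d div 2. smult (\<gamma> i) (monom 1 i * [:1, 1:] ^ (d - 2 * i)))"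

definition SI_sequence :: "(nat \<Rightarrow> int) \<Rightarrow> nat \<Rightarrow> bool" where
  "SI_sequence h d \<longleftrightarrow> h 0 = 1 \<and> (\<forall>i\<le>d. h i = h (d - i)) \<and> is_M_vector (g_vector h) (d div 2)"

end

theory Submission
  imports Defs "HOL-Library.Nat_Bijection"
begin

text \<open>
  Multiplying the gamma-expansion by 1 - x shows that
  g_k = sum_i gamma_i (C(d - 2i, k - i) - C(d - 2i, k - i - 1)). For 2j \<le> n + 1 the ballot
  number C(n, j) - C(n, j - 1) counts the j-subsets S of {1..n} in which every t \<in> S has at
  most t/2 elements of S up to t; these ballot sets form a simplicial complex in which every
  face extends greedily to one of size n div 2. Hence the disjoint unions of a face F of the
  complex with f-vector gamma and a ballot subset of {1..d - 2|F|} form a pure simplicial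
  complex with f-vector g. Sending faces to their indicator multisets turns it into a pure
  multicomplex with the same face counts.
\<close>

section \<open>Ballot sets\<close>

definition ballot_sets :: "nat \<Rightarrow> nat set set" where
  "ballot_sets n = {S. S \<subseteq> {1..n} \<and> (\<forall>t\<in>S. 2 * card {s\<in>S. s \<le> t} \<le> t)}"

lemma ballot_setsI:
  "S \<subseteq> {1..n} \<Longrightarrow> (\<And>t. t \<in> S \<Longrightarrow> 2 * card {s\<in>S. s \<le> t} \<le> t) \<Longrightarrow> S \<in> ballot_sets n"
  unfolding ballot_sets_def by blast

lemma ballot_setsD:
  assumes "S \<in> ballot_sets n"
  shows "S \<subseteq> {1..n}" and "t \<in> S \<Longrightarrow> 2 * card {s\<in>S. s \<le> t} \<le> t"
  using assms unfolding ballot_sets_def by blast+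

lemma finite_ballot_sets: "finite (ballot_sets n)"
  by (rule finite_subset[of _ "Pow {1..n}"]) (auto simp: ballot_sets_def)

lemma finite_ballot_set: "S \<in> ballot_sets n \<Longrightarrow> finite S"
  using finite_subset ballot_setsD(1) by blast

lemma ballot_sets_mono:
  assumes S: "S \<in> ballot_sets n" and "T \<subseteq> S" and "n \<le> m"
  shows "T \<in> ballot_sets m"
proof (rule ballot_setsI)
  show "T \<subseteq> {1..m}" using ballot_setsD(1)[OF S] assms(2,3) by auto
next
  fix t assume "t \<in> T"
  have "card {s\<in>T. s \<le> t} \<le> card {s\<in>S. s \<le> t}"
    using finite_ballot_set[OF S] \<open>T \<subseteq> S\<close> by (intro card_mono) auto
  with ballot_setsD(2)[OF S] \<open>t \<in> T\<close> \<open>T \<subseteq> S\<close> show "2 * card {s\<in>T. s \<le> t} \<le> t" by fastforce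
qed

lemma card_ballot_set_le:
  assumes S: "S \<in> ballot_sets n"
  shows "2 * card S \<le> n"
proof (cases "S = {}")
  case False
  have "Max S \<in> S" using False finite_ballot_set[OF S] by simp
  moreover have "{s\<in>S. s \<le> Max S} = S" using finite_ballot_set[OF S] by auto
  ultimately show ?thesis using ballot_setsD[OF S] by fastforce
qed simp

text \<open>Add the largest missing element x: prefixes below x do not change, and
  every prefix ending at some t \<ge> x misses exactly the n - t elements above t.\<close>
lemma ballot_set_insert:
  assumes S: "S \<in> ballot_sets n" and room: "2 * card S + 2 \<le> n"
  obtains x where "x \<notin> S" and "insert x S \<in> ballot_sets n"
proof -
  have fin: "finite S" and sub: "S \<subseteq> {1..n}" using S finite_ballot_set ballot_setsD by auto
  have "\<not> {1..n} \<subseteq> S"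
  proof
    assume "{1..n} \<subseteq> S"
    then have "card {1..n} \<le> card S" by (rule card_mono[OF fin])
    with room show False by simp
  qed
  then have ne: "{1..n} - S \<noteq> {}" by blast
  define x where "x = Max ({1..n} - S)"
  have x: "x \<in> {1..n} - S" using ne unfolding x_def by (intro Max_in) auto
  have above: "{x<..n} \<subseteq> S"
  proof
    fix y assume y: "y \<in> {x<..n}"
    show "y \<in> S"
    proof (rule ccontr)
      assume "y \<notin> S"
      with y x have "y \<le> x" unfolding x_def by (intro Max_ge) auto
      with y show False by simp
    qed
  qed
  have "insert x S \<in> ballot_sets n"
  proof (rule ballot_setsI)
    show sub': "insert x S \<subseteq> {1..n}" using x sub by blast
    fix t assume t: "t \<in> insert x S"
    show "2 * card {s \<in> insert x S. s \<le> t} \<le> t"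
    proof (cases "t < x")
      case True
      then have "{s \<in> insert x S. s \<le> t} = {s \<in> S. s \<le> t}" by auto
      with True t ballot_setsD(2)[OF S] show ?thesis by auto
    next
      case False
      have "{s \<in> insert x S. s \<le> t} = insert x S - {t<..n}" using sub' by auto
      moreover have "{t<..n} \<subseteq> {x<..n}" using False by auto
      with above have "{t<..n} \<subseteq> insert x S" by blast
      ultimately have "card {s \<in> insert x S. s \<le> t} = card S + 1 - (n - t)"
        using fin x by (simp add: card_Diff_subset)
      moreover have "t \<le> n" using t sub' by auto
      ultimately show ?thesis using room by linarith
    qed
  qed
  with x that show ?thesis by blast
qed

lemma ballot_set_extend:
  assumes "S \<in> ballot_sets n"
  obtains T where "S \<subseteq> T" and "T \<in> ballot_sets n" and "card T = n div 2"
proof -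
  have "\<exists>T. S \<subseteq> T \<and> T \<in> ballot_sets n \<and> card T = n div 2"
    if "S \<in> ballot_sets n" and "card S + k = n div 2" for S k
    using that
  proof (induction k arbitrary: S)
    case 0
    then show ?case by auto
  next
    case (Suc k)
    then have "2 * card S + 2 \<le> n" by presburger
    then obtain x where x: "x \<notin> S" "insert x S \<in> ballot_sets n"
      using ballot_set_insert Suc.prems(1) by blast
    with Suc.prems finite_ballot_set have "card (insert x S) + k = n div 2" by simp
    with Suc.IH[OF x(2)] show ?case by blast
  qed
  moreover have "card S + (n div 2 - card S) = n div 2"
    using card_ballot_set_le[OF assms] by presburger
  ultimately show ?thesis using assms that by blast
qed

lemma ballot_sets_Suc:
  "ballot_sets (Suc m) =
     ballot_sets m \<union> insert (Suc m) ` {S \<in> ballot_sets m. 2 * card S + 2 \<le> Suc m}"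
proof (intro equalityI subsetI)
  fix S assume S: "S \<in> ballot_sets (Suc m)"
  have "S - {Suc m} \<subseteq> {1..m}" using ballot_setsD(1)[OF S] by (auto simp: le_Suc_eq)
  then have S': "S - {Suc m} \<in> ballot_sets m"
    using ballot_setsD(2)[OF ballot_sets_mono[OF S Diff_subset order_refl]] by (rule ballot_setsI)
  show "S \<in> ballot_sets m \<union> insert (Suc m) ` {S \<in> ballot_sets m. 2 * card S + 2 \<le> Suc m}"
  proof (cases "Suc m \<in> S")
    case False
    with S' show ?thesis by simp
  next
    case True
    have "2 * card S \<le> Suc m" by (rule card_ballot_set_le[OF S])
    moreover have "card S = card (S - {Suc m}) + 1"
      using card_Suc_Diff1[OF finite_ballot_set[OF S] True] by simp
    moreover have "S = insert (Suc m) (S - {Suc m})" using True by auto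
    ultimately show ?thesis using S' by (intro UnI2 image_eqI[of S _ "S - {Suc m}"]) auto
  qed
next
  fix S assume "S \<in> ballot_sets m \<union> insert (Suc m) ` {S \<in> ballot_sets m. 2 * card S + 2 \<le> Suc m}"
  then consider "S \<in> ballot_sets m"
    | S' where "S' \<in> ballot_sets m" "2 * card S' + 2 \<le> Suc m" "S = insert (Suc m) S'"
    by blast
  then show "S \<in> ballot_sets (Suc m)"
  proof cases
    case 1
    show ?thesis by (rule ballot_sets_mono[OF 1 order_refl]) simp
  next
    case 2
    have sub: "S' \<subseteq> {1..m}" using ballot_setsD(1)[OF 2(1)] .
    show ?thesis
    proof (rule ballot_setsI)
      show "S \<subseteq> {1..Suc m}" using sub 2(3) by auto
      fix t assume "t \<in> S"
      then consider "t = Suc m" | "t \<in> S'" "t \<le> m" using 2(3) sub by auto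
      then show "2 * card {s \<in> S. s \<le> t} \<le> t"
      proof cases
        case 1
        then have "{s \<in> S. s \<le> t} = insert (Suc m) S'" using sub 2(3) by auto
        moreover have "Suc m \<notin> S'" using sub by auto
        ultimately show ?thesis using 1 2(2) finite_ballot_set[OF 2(1)] by simp
      next
        case 3: 2
        then have "{s \<in> S. s \<le> t} = {s \<in> S'. s \<le> t}" using 2(3) by auto
        then show ?thesis using ballot_setsD(2)[OF 2(1) 3(1)] by simp
      qed
    qed
  qed
qed

definition ballot_count :: "nat \<Rightarrow> nat \<Rightarrow> nat" where
  "ballot_count n j = card {S \<in> ballot_sets n. card S = j}"

lemma ballot_count_0: "ballot_count n 0 = 1"
proof -
  have "{S \<in> ballot_sets n. card S = 0} = {{}}"
    using finite_ballot_set by (auto intro: ballot_setsI)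
  then show ?thesis unfolding ballot_count_def by simp
qed

lemma ballot_count_eq_0:
  assumes "n < 2 * j"
  shows "ballot_count n j = 0"
proof -
  have none: "{S \<in> ballot_sets n. card S = j} = {}" using assms card_ballot_set_le by fastforce
  show ?thesis unfolding ballot_count_def none by simp
qed

lemma ballot_count_Suc_Suc:
  "ballot_count (Suc m) (Suc j) =
     ballot_count m (Suc j) + (if 2 * j + 2 \<le> Suc m then ballot_count m j else 0)"
proof -
  let ?new = "{S \<in> ballot_sets m. card S = j \<and> 2 * j + 2 \<le> Suc m}"
  have notin: "Suc m \<notin> S" and fin: "finite S" if "S \<in> ballot_sets m" for S
    using that ballot_setsD(1) finite_ballot_set by fastforce+
  have split: "{S \<in> ballot_sets (Suc m). card S = Suc j} =
      {S \<in> ballot_sets m. card S = Suc j} \<union> insert (Suc m) ` ?new"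
  proof (intro equalityI subsetI)
    fix S assume "S \<in> {S \<in> ballot_sets (Suc m). card S = Suc j}"
    then show "S \<in> {S \<in> ballot_sets m. card S = Suc j} \<union> insert (Suc m) ` ?new"
      unfolding ballot_sets_Suc using notin fin by auto
  next
    fix S assume "S \<in> {S \<in> ballot_sets m. card S = Suc j} \<union> insert (Suc m) ` ?new"
    then show "S \<in> {S \<in> ballot_sets (Suc m). card S = Suc j}"
      unfolding ballot_sets_Suc using notin fin by auto
  qed
  have "card (insert (Suc m) ` ?new) = card ?new"
    using notin by (intro card_image inj_onI) (metis mem_Collect_eq insert_ident)
  moreover have "card ?new = (if 2 * j + 2 \<le> Suc m then ballot_count m j else 0)"
    unfolding ballot_count_def by auto
  moreover have "{S \<in> ballot_sets m. card S = Suc j} \<inter> insert (Suc m) ` ?new = {}"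
    using notin by blast
  ultimately show ?thesis
    unfolding ballot_count_def split using finite_ballot_sets
    by (subst card_Un_disjoint) auto
qed

text \<open>The case split avoids the truncated subtraction j - 1 at j = 0.\<close>
definition ballot_number :: "nat \<Rightarrow> nat \<Rightarrow> int" where
  "ballot_number n j = int (n choose j) - (if j = 0 then 0 else int (n choose (j - 1)))"

lemma ballot_number_Suc_Suc: "ballot_number (Suc m) (Suc j) = ballot_number m (Suc j) + ballot_number m j"
  by (cases j) (simp_all add: ballot_number_def)

lemma ballot_number_middle: "ballot_number (2 * j + 1) (j + 1) = 0"
  using binomial_symmetric[of j "2 * j + 1"] by (simp add: ballot_number_def)

lemma ballot_count_eq_ballot_number:
  "2 * j \<le> n + 1 \<Longrightarrow> int (ballot_count n j) = ballot_number n j"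
proof (induction n arbitrary: j)
  case 0
  then have "j = 0" by simp
  then show ?case by (simp add: ballot_count_0 ballot_number_def)
next
  case (Suc m)
  show ?case
  proof (cases j)
    case 0
    then show ?thesis by (simp add: ballot_count_0 ballot_number_def)
  next
    case (Suc i)
    show ?thesis
    proof (cases "2 * j \<le> Suc m")
      case True
      then show ?thesis
        using Suc Suc.IH[of j] Suc.IH[of i] by (simp add: ballot_count_Suc_Suc ballot_number_Suc_Suc)
    next
      case False
      then have "Suc m = 2 * i + 1" using Suc Suc.prems by simp
      then show ?thesis using Suc False ballot_count_eq_0 ballot_number_middle by simp
    qed
  qed
qed

lemma Plus_eq_Plus_iff: "A <+> B = C <+> D \<longleftrightarrow> A = C \<and> B = D"
proof
  have proj: "Inl -` (X <+> Y) = X" "Inr -` (X <+> Y) = Y" for X Y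
    by auto
  assume "A <+> B = C <+> D"
  then show "A = C \<and> B = D" using proj by metis
qed simp

lemma card_sum_encode_Plus:
  "finite A \<Longrightarrow> finite B \<Longrightarrow> card (sum_encode ` (A <+> B)) = card A + card B"
  by (simp add: card_image inj_sum_encode card_Plus)

lemma sum_encode_Plus_eq_iff:
  "sum_encode ` (A <+> B) = sum_encode ` (C <+> D) \<longleftrightarrow> A = C \<and> B = D"
  by (simp add: inj_image_eq_iff[OF inj_sum_encode] Plus_eq_Plus_iff)

lemma subset_sum_encode_Plus:
  assumes "G \<subseteq> sum_encode ` (A <+> B)"
  obtains A' B' where "A' \<subseteq> A" and "B' \<subseteq> B" and "G = sum_encode ` (A' <+> B')"
proof
  let ?A' = "{a. sum_encode (Inl a) \<in> G}" and ?B' = "{b. sum_encode (Inr b) \<in> G}"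
  show "?A' \<subseteq> A" and "?B' \<subseteq> B" using assms by (auto simp: sum_encode_eq)
  show "G = sum_encode ` (?A' <+> ?B')"
  proof (intro equalityI subsetI)
    fix x assume "x \<in> G"
    moreover have "x = sum_encode (sum_decode x)" by simp
    ultimately show "x \<in> sum_encode ` (?A' <+> ?B')"
      by (cases "sum_decode x") auto
  qed auto
qed

section \<open>The ballot extension of a simplicial complex\<close>

lemma pure_complexI:
  assumes "\<And>F. F \<in> D \<Longrightarrow> \<exists>G\<in>D. F \<subseteq> G \<and> card G = k"
  shows "pure_complex D"
proof -
  have "card F = k" if "F \<in> D" and "\<not> (\<exists>H\<in>D. F \<subset> H)" for F
    using assms[OF that(1)] that(2) by blast
  then show ?thesis unfolding pure_complex_def by simp
qed

text \<open>sum_encode (evens and odds) keeps the two parts of a face apart inside nat.\<close>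
definition ballot_extension :: "nat \<Rightarrow> nat set set \<Rightarrow> nat set set" where
  "ballot_extension d \<Delta> =
     (\<lambda>(F, S). sum_encode ` (F <+> S)) ` (SIGMA F:\<Delta>. ballot_sets (d - 2 * card F))"

lemma ballot_extensionI:
  "F \<in> \<Delta> \<Longrightarrow> S \<in> ballot_sets (d - 2 * card F) \<Longrightarrow> sum_encode ` (F <+> S) \<in> ballot_extension d \<Delta>"
  unfolding ballot_extension_def by (rule image_eqI[of _ _ "(F, S)"]) auto

lemma ballot_extensionE:
  assumes "X \<in> ballot_extension d \<Delta>"
  obtains F S where "F \<in> \<Delta>" and "S \<in> ballot_sets (d - 2 * card F)" and "X = sum_encode ` (F <+> S)"
  using assms unfolding ballot_extension_def by auto

lemma simplicial_complex_ballot_extension: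
  assumes \<Delta>: "simplicial_complex \<Delta>"
  shows "simplicial_complex (ballot_extension d \<Delta>)"
  unfolding simplicial_complex_def
proof (intro conjI ballI allI impI)
  have fin: "finite \<Delta>" and faces_fin: "\<And>F. F \<in> \<Delta> \<Longrightarrow> finite F"
    and closed: "\<And>F G. F \<in> \<Delta> \<Longrightarrow> G \<subseteq> F \<Longrightarrow> G \<in> \<Delta>"
    using \<Delta> unfolding simplicial_complex_def by blast+
  show "finite (ballot_extension d \<Delta>)"
    unfolding ballot_extension_def using fin finite_ballot_sets by (intro finite_imageI finite_SigmaI)
  obtain F0 where "F0 \<in> \<Delta>" using \<Delta> unfolding simplicial_complex_def by blast
  then have "{} \<in> \<Delta>" using closed by blast
  moreover have "{} \<in> ballot_sets n" for n by (rule ballot_setsI) simp_all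
  ultimately show "ballot_extension d \<Delta> \<noteq> {}" using ballot_extensionI by blast
  fix X assume "X \<in> ballot_extension d \<Delta>"
  then obtain F S where F: "F \<in> \<Delta>" and S: "S \<in> ballot_sets (d - 2 * card F)"
    and X_eq: "X = sum_encode ` (F <+> S)"
    by (rule ballot_extensionE)
  show "finite X" using X_eq faces_fin[OF F] finite_ballot_set[OF S] by simp
  fix G assume "G \<subseteq> X"
  then obtain F' S' where "F' \<subseteq> F" "S' \<subseteq> S" and G: "G = sum_encode ` (F' <+> S')"
    unfolding X_eq by (rule subset_sum_encode_Plus)
  have "card F' \<le> card F" using card_mono[OF faces_fin[OF F] \<open>F' \<subseteq> F\<close>] .
  then have "S' \<in> ballot_sets (d - 2 * card F')"
    by (intro ballot_sets_mono[OF S \<open>S' \<subseteq> S\<close>]) simp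
  with closed[OF F \<open>F' \<subseteq> F\<close>] show "G \<in> ballot_extension d \<Delta>"
    unfolding G by (rule ballot_extensionI)
qed

lemma ballot_extension_face_extends:
  assumes \<Delta>: "simplicial_complex \<Delta>" and small: "\<And>F. F \<in> \<Delta> \<Longrightarrow> card F \<le> d div 2"
    and X: "X \<in> ballot_extension d \<Delta>"
  shows "card X \<le> d div 2" and "\<exists>Y\<in>ballot_extension d \<Delta>. X \<subseteq> Y \<and> card Y = d div 2"
proof -
  obtain F S where F: "F \<in> \<Delta>" and S: "S \<in> ballot_sets (d - 2 * card F)"
    and X_eq: "X = sum_encode ` (F <+> S)"
    using X by (rule ballot_extensionE)
  have fin: "finite F" using \<Delta> F unfolding simplicial_complex_def by blast
  have "card X = card F + card S"
    unfolding X_eq using fin finite_ballot_set[OF S] by (rule card_sum_encode_Plus)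
  then show "card X \<le> d div 2"
    using card_ballot_set_le[OF S] small[OF F] by presburger
  obtain T where "S \<subseteq> T" and T: "T \<in> ballot_sets (d - 2 * card F)"
    and card_T: "card T = (d - 2 * card F) div 2"
    using ballot_set_extend[OF S] by blast
  have "card (sum_encode ` (F <+> T)) = d div 2"
    using card_sum_encode_Plus[OF fin finite_ballot_set[OF T]] card_T small[OF F] by presburger
  moreover have "X \<subseteq> sum_encode ` (F <+> T)"
    unfolding X_eq using \<open>S \<subseteq> T\<close> by (intro image_mono) auto
  ultimately show "\<exists>Y\<in>ballot_extension d \<Delta>. X \<subseteq> Y \<and> card Y = d div 2"
    using ballot_extensionI[OF F T] by blast
qed

lemma card_ballot_extension_faces:
  assumes \<Delta>: "simplicial_complex \<Delta>"
  shows "card {X \<in> ballot_extension d \<Delta>. card X = k} =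
    (\<Sum>F\<in>\<Delta>. if card F \<le> k then ballot_count (d - 2 * card F) (k - card F) else 0)"
proof -
  have fin: "finite \<Delta>" and faces_fin: "\<And>F. F \<in> \<Delta> \<Longrightarrow> finite F"
    using \<Delta> unfolding simplicial_complex_def by blast+
  let ?Q = "\<lambda>F. {S \<in> ballot_sets (d - 2 * card F). card F + card S = k}"
  let ?enc = "\<lambda>(F, S). sum_encode ` (F <+> S)"
  have card_enc: "card (?enc FS) = card (fst FS) + card (snd FS)"
    if "FS \<in> (SIGMA F:\<Delta>. ballot_sets (d - 2 * card F))" for FS
    using that faces_fin finite_ballot_set by (auto simp: card_sum_encode_Plus)
  have "{X \<in> ballot_extension d \<Delta>. card X = k} =
      ?enc ` {FS \<in> (SIGMA F:\<Delta>. ballot_sets (d - 2 * card F)). card (?enc FS) = k}"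
    unfolding ballot_extension_def by auto
  also have "\<dots> = ?enc ` (SIGMA F:\<Delta>. ?Q F)"
    by (rule arg_cong[where f = "image ?enc"]) (use card_enc in auto)
  finally have eq: "{X \<in> ballot_extension d \<Delta>. card X = k} = ?enc ` (SIGMA F:\<Delta>. ?Q F)" .
  have inj: "inj_on ?enc (SIGMA F:\<Delta>. ?Q F)"
  proof (rule inj_onI)
    fix x y assume "?enc x = ?enc y"
    then have "sum_encode ` (fst x <+> snd x) = sum_encode ` (fst y <+> snd y)"
      by (simp only: case_prod_beta)
    then show "x = y" by (simp only: sum_encode_Plus_eq_iff prod_eq_iff)
  qed
  have card_Q: "card (?Q F) = (if card F \<le> k then ballot_count (d - 2 * card F) (k - card F) else 0)"
    for F
  proof (cases "card F \<le> k")
    case True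
    then have Q: "?Q F = {S \<in> ballot_sets (d - 2 * card F). card S = k - card F}" by auto
    show ?thesis unfolding Q ballot_count_def using True by simp
  next
    case False
    then have Q: "?Q F = {}" by auto
    show ?thesis unfolding Q using False by simp
  qed
  have "\<forall>F\<in>\<Delta>. finite (?Q F)" using finite_ballot_sets by simp
  then have "card (SIGMA F:\<Delta>. ?Q F) = (\<Sum>F\<in>\<Delta>. card (?Q F))" by (rule card_SigmaI[OF fin])
  then show ?thesis unfolding eq card_image[OF inj] card_Q .
qed


section \<open>The f-vector of the ballot extension\<close>

lemma sum_comp_eq_sum_card_fibres:
  fixes \<phi> :: "nat \<Rightarrow> 'b::comm_semiring_1"
  assumes "finite A" and "g ` A \<subseteq> {..K}"
  shows "(\<Sum>x\<in>A. \<phi> (g x)) = (\<Sum>i\<le>K. of_nat (card {x\<in>A. g x = i}) * \<phi> i)"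
proof -
  have "(\<Sum>x\<in>A. \<phi> (g x)) = (\<Sum>i\<le>K. \<Sum>x\<in>{x\<in>A. g x = i}. \<phi> (g x))"
    by (rule sum.group[OF assms(1) finite_atMost assms(2), symmetric])
  also have "\<dots> = (\<Sum>i\<le>K. \<Sum>x\<in>{x\<in>A. g x = i}. \<phi> i)"
    by (intro sum.cong) auto
  finally show ?thesis by simp
qed

lemma coeff_one_plus_X_power: "coeff ([:1, 1:] ^ n) j = (of_nat (n choose j) :: 'a::comm_semiring_1)"
proof (cases "j \<le> n")
  case True
  then show ?thesis by (simp add: coeff_linear_poly_power)
next
  case False
  then show ?thesis by (simp add: coeff_eq_0 degree_linear_power binomial_eq_0)
qed

lemma coeff_h_poly: "k \<le> d \<Longrightarrow> coeff (h_poly h d) k = h k"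
  unfolding h_poly_def by (simp add: coeff_sum coeff_monom)

lemma coeff_gamma_expansion:
  "coeff (gamma_expansion \<gamma> d) k =
     (\<Sum>i\<le>d div 2. \<gamma> i * (if i \<le> k then int ((d - 2 * i) choose (k - i)) else 0))"
  unfolding gamma_expansion_def coeff_sum coeff_smult coeff_monom_mult coeff_one_plus_X_power
  by (intro sum.cong) auto

lemma g_vector_gamma_expansion:
  assumes "h_poly h d = gamma_expansion \<gamma> d" and "k \<le> d div 2"
  shows "g_vector h k =
    (\<Sum>i\<le>d div 2. \<gamma> i * (if i \<le> k then ballot_number (d - 2 * i) (k - i) else 0))"
proof (cases "k = 0")
  case True
  have "g_vector h k = coeff (gamma_expansion \<gamma> d) 0"
    using True coeff_h_poly[of 0 d h] assms(1) by (simp add: g_vector_def)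
  also have "\<dots> = (\<Sum>i\<le>d div 2. \<gamma> i * (if i \<le> k then ballot_number (d - 2 * i) (k - i) else 0))"
    unfolding coeff_gamma_expansion using True by (intro sum.cong) (auto simp: ballot_number_def)
  finally show ?thesis .
next
  case False
  have "g_vector h k = coeff (gamma_expansion \<gamma> d) k - coeff (gamma_expansion \<gamma> d) (k - 1)"
    using False assms coeff_h_poly[of k d h] coeff_h_poly[of "k - 1" d h] by (simp add: g_vector_def)
  also have "\<dots> = (\<Sum>i\<le>d div 2. \<gamma> i * (if i \<le> k then ballot_number (d - 2 * i) (k - i) else 0))"
    unfolding coeff_gamma_expansion sum_subtractf[symmetric]
  proof (intro sum.cong refl)
    fix i
    consider "i < k" | "i = k" | "k < i" by linarith
    then show "\<gamma> i * (if i \<le> k then int ((d - 2 * i) choose (k - i)) else 0)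
        - \<gamma> i * (if i \<le> k - 1 then int ((d - 2 * i) choose (k - 1 - i)) else 0)
      = \<gamma> i * (if i \<le> k then ballot_number (d - 2 * i) (k - i) else 0)"
      using False by cases (auto simp: ballot_number_def right_diff_distrib Suc_diff_Suc)
  qed
  finally show ?thesis .
qed

lemma has_f_vector_ballot_extension:
  assumes \<Delta>: "simplicial_complex \<Delta>" and f: "has_f_vector \<Delta> \<gamma> (d div 2)"
    and h: "h_poly h d = gamma_expansion \<gamma> d"
  shows "has_f_vector (ballot_extension d \<Delta>) (g_vector h) (d div 2)"
  unfolding has_f_vector_def
proof (intro conjI allI impI ballI)
  have small: "\<And>F. F \<in> \<Delta> \<Longrightarrow> card F \<le> d div 2"
    and \<gamma>: "\<And>i. i \<le> d div 2 \<Longrightarrow> \<gamma> i = int (card {F\<in>\<Delta>. card F = i})"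
    using f unfolding has_f_vector_def by blast+
  fix X assume "X \<in> ballot_extension d \<Delta>"
  then show "card X \<le> d div 2" using ballot_extension_face_extends(1)[OF \<Delta> small] by blast
next
  have fin: "finite \<Delta>" and small: "card ` \<Delta> \<subseteq> {..d div 2}"
    and \<gamma>: "\<And>i. i \<le> d div 2 \<Longrightarrow> \<gamma> i = int (card {F\<in>\<Delta>. card F = i})"
    using \<Delta> f unfolding has_f_vector_def simplicial_complex_def by auto
  fix k assume k: "k \<le> d div 2"
  define \<phi> where "\<phi> i = int (if i \<le> k then ballot_count (d - 2 * i) (k - i) else 0)" for i
  have "g_vector h k =
      (\<Sum>i\<le>d div 2. \<gamma> i * (if i \<le> k then ballot_number (d - 2 * i) (k - i) else 0))"
    by (rule g_vector_gamma_expansion[OF h k])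
  also have "\<dots> = (\<Sum>i\<le>d div 2. of_nat (card {F\<in>\<Delta>. card F = i}) * \<phi> i)"
  proof (intro sum.cong refl)
    fix i assume "i \<in> {..d div 2}"
    moreover have "2 * (k - i) \<le> d - 2 * i + 1" using k by presburger
    ultimately show "\<gamma> i * (if i \<le> k then ballot_number (d - 2 * i) (k - i) else 0) =
        of_nat (card {F\<in>\<Delta>. card F = i}) * \<phi> i"
      using \<gamma> by (simp add: \<phi>_def ballot_count_eq_ballot_number)
  qed
  also have "\<dots> = (\<Sum>F\<in>\<Delta>. \<phi> (card F))"
    by (rule sum_comp_eq_sum_card_fibres[OF fin small, symmetric])
  also have "\<dots> = int (card {X \<in> ballot_extension d \<Delta>. card X = k})"
    unfolding card_ballot_extension_faces[OF \<Delta>] \<phi>_def by (simp add: of_nat_sum)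
  finally show "g_vector h k = int (card {X \<in> ballot_extension d \<Delta>. card X = k})" .
qed

section \<open>Pure f-vectors are pure M-vectors\<close>

lemma msubset_mset_setE:
  assumes "finite X" and "n \<subseteq># mset_set X"
  obtains Y where "Y \<subseteq> X" and "n = mset_set Y"
proof
  show "set_mset n \<subseteq> X" using set_mset_mono[OF assms(2)] assms(1) by simp
  show "n = mset_set (set_mset n)"
  proof (rule multiset_eqI)
    fix x
    have "count n x \<le> count (mset_set X) x" using assms(2) by (rule mset_subset_eq_count)
    then have le1: "count n x \<le> 1" by (simp add: count_mset_set' split: if_splits)
    show "count n x = count (mset_set (set_mset n)) x"
    proof (cases "x \<in># n")
      case True
      then have "0 < count n x" and "count (mset_set (set_mset n)) x = 1" by simp_all
      with le1 show ?thesis by linarith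
    next
      case False
      then show ?thesis by (simp add: not_in_iff)
    qed
  qed
qed

lemma mset_set_subset_mset_iff:
  "finite A \<Longrightarrow> finite B \<Longrightarrow> mset_set A \<subset># mset_set B \<longleftrightarrow> A \<subset> B"
  by (auto simp: subset_mset.less_le)

lemma is_pure_M_vector_if_pure_f_vector:
  assumes "is_pure_f_vector f k"
  shows "is_pure_M_vector f k"
proof -
  obtain D where D: "simplicial_complex D" and pure: "pure_complex D" and f: "has_f_vector D f k"
    using assms unfolding is_pure_f_vector_def by blast
  have faces_fin: "\<And>X. X \<in> D \<Longrightarrow> finite X"
    and closed: "\<And>X Y. X \<in> D \<Longrightarrow> Y \<subseteq> X \<Longrightarrow> Y \<in> D"
    using D unfolding simplicial_complex_def by blast+
  let ?M = "mset_set ` D"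
  have "multicomplex ?M"
    unfolding multicomplex_def
  proof (intro conjI ballI allI impI)
    show "finite ?M" "?M \<noteq> {}" using D unfolding simplicial_complex_def by auto
    fix m n assume "m \<in> ?M" and "n \<subseteq># m"
    then obtain X where X: "X \<in> D" and n: "n \<subseteq># mset_set X" by blast
    obtain Y where "Y \<subseteq> X" and "n = mset_set Y"
      by (rule msubset_mset_setE[OF faces_fin[OF X] n])
    then show "n \<in> ?M" using closed[OF X] by blast
  qed
  moreover have "pure_multicomplex ?M"
    unfolding pure_multicomplex_def
  proof (intro ballI impI)
    have maximal: "(\<exists>H\<in>D. mset_set X \<subset># mset_set H) \<longleftrightarrow> (\<exists>H\<in>D. X \<subset> H)" if "X \<in> D" for X
      using faces_fin that by (intro bex_cong refl mset_set_subset_mset_iff)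
    fix m n assume "m \<in> ?M" "n \<in> ?M"
      and max: "\<not> (\<exists>p\<in>?M. m \<subset># p) \<and> \<not> (\<exists>p\<in>?M. n \<subset># p)"
    then obtain X Y where X: "X \<in> D" "m = mset_set X" and Y: "Y \<in> D" "n = mset_set Y" by blast
    have "\<not> (\<exists>H\<in>D. mset_set X \<subset># mset_set H)" and "\<not> (\<exists>H\<in>D. mset_set Y \<subset># mset_set H)"
      using max unfolding X(2) Y(2) by simp_all
    then have "\<not> (\<exists>H\<in>D. X \<subset> H) \<and> \<not> (\<exists>H\<in>D. Y \<subset> H)"
      unfolding maximal[OF X(1), symmetric] maximal[OF Y(1), symmetric] by (rule conjI)
    then have "card X = card Y"
      by (rule pure[unfolded pure_complex_def, rule_format, OF X(1) Y(1)])
    then show "size m = size n" unfolding X(2) Y(2) by simp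
  qed
  moreover have "has_M_vector ?M f k"
    unfolding has_M_vector_def
  proof (intro conjI ballI allI impI)
    fix m assume "m \<in> ?M"
    then show "size m \<le> k" using f unfolding has_f_vector_def by auto
  next
    fix i assume "i \<le> k"
    have "inj_on mset_set {X \<in> D. card X = i}"
      by (rule inj_onI) (use faces_fin in auto)
    moreover have "{m \<in> ?M. size m = i} = mset_set ` {X \<in> D. card X = i}" by auto
    ultimately have "card {m \<in> ?M. size m = i} = card {X \<in> D. card X = i}"
      by (simp add: card_image)
    then show "f i = int (card {m \<in> ?M. size m = i})"
      using f \<open>i \<le> k\<close> unfolding has_f_vector_def by simp
  qed
  ultimately show ?thesis unfolding is_pure_M_vector_def by blast
qed

theorem proposition8p2:
  fixes d :: nat and h \<gamma> :: "nat \<Rightarrow> int"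
  assumes "h 0 = 1"
    and "\<forall>i\<le>d. h i = h (d - i)"
    and "h_poly h d = gamma_expansion \<gamma> d"
    and "is_f_vector \<gamma> (d div 2)"
  shows "is_pure_f_vector (g_vector h) (d div 2)
       \<and> is_pure_M_vector (g_vector h) (d div 2)
       \<and> SI_sequence h d"
proof -
  obtain \<Delta> where \<Delta>: "simplicial_complex \<Delta>" and f: "has_f_vector \<Delta> \<gamma> (d div 2)"
    using assms(4) unfolding is_f_vector_def by blast
  have small: "\<And>F. F \<in> \<Delta> \<Longrightarrow> card F \<le> d div 2"
    using f unfolding has_f_vector_def by blast
  have "pure_complex (ballot_extension d \<Delta>)"
    by (rule pure_complexI) (rule ballot_extension_face_extends(2)[OF \<Delta> small])
  then have pure_f: "is_pure_f_vector (g_vector h) (d div 2)"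
    unfolding is_pure_f_vector_def
    using simplicial_complex_ballot_extension[OF \<Delta>] has_f_vector_ballot_extension[OF \<Delta> f assms(3)]
    by blast
  then have pure_M: "is_pure_M_vector (g_vector h) (d div 2)"
    by (rule is_pure_M_vector_if_pure_f_vector)
  then have "is_M_vector (g_vector h) (d div 2)"
    unfolding is_pure_M_vector_def is_M_vector_def by blast
  with assms(1,2) pure_f pure_M show ?thesis
    unfolding SI_sequence_def by blast
qed

end
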